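(* Let $K$ be a finite oriented simplicial complex, let $q,h,h'$ be non-negative integers, and fix the basis $\{\sigma_1^{(q)},\dots,\sigma_n^{(q)}\}$ of $C_q(K)$ given by the oriented $q$-simplices (and the analogous bases of $C_{q+h}(K)$ and $C_{q-h'}(K)$). Let $B_{q+h,h}$ and $B_{q,h'}$ be the matrices of $\partial_{q+h,h}\colon C_{q+h}(K)\to C_q(K)$ and $\partial_{q,h'}\colon C_q(K)\to C_{q-h'}(K)$ in these bases, and set $L^U_{q,h}=B_{q+h,h}B_{q+h,h}^t$, $L^L_{q,h'}=B_{q,h'}^tB_{q,h'}$ and $L_{q,h,h'}=L^U_{q,h}+L^L_{q,h'}$ (the matrix of the multi-combinatorial Laplacian $\Delta_{q,h,h'}=\partial_{q+h,h}\circ\partial^*_{q+h,h}+\partial^*_{q,h'}\circ\partial_{q,h'}$). Then $$\big(L^U_{q,h}\big)_{i,j}=\begin{cases}\deg_U^{h,q+h}(\sigma_i^{(q)}) & i=j,\\ \operatorname{odeg}_U^{q+h}(\sigma_i^{(q)},\sigma_j^{(q)}) & i\neq j,\end{cases}\qquad \big(L^L_{q,h'}\big)_{i,j}=\begin{cases}\binom{q+1}{q-h'+1} & i=j,\\ \operatorname{odeg}_L^{q-h'}(\sigma_i^{(q)},\sigma_j^{(q)}) & i\neq j,\end{cases}$$ and $$\big(L_{q,h,h'}\big)_{i,j}=\begin{cases}\deg_U^{h,q+h}(\sigma_i^{(q)})+\binom{q+1}{q-h'+1} & i=j,\\ \operatorname{odeg}_U^{q+h}(\sigma_i^{(q)},\sigma_j^{(q)})+\operatorname{odeg}_L^{q-h'}(\sigma_i^{(q)},\sigma_j^{(q)})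 & i\neq j.\end{cases}$$
   Context: $K$ is a finite abstract simplicial complex (finite family of nonempty finite vertex sets closed under nonempty subsets); a $q$-simplex has $q+1$ vertices; a face of a simplex is a simplex of $K$ contained in it (a simplex is a face of itself). Orientation: orderings of the vertices modulo even permutations; $[v_{\eta(0)},\dots,v_{\eta(q)}]=\operatorname{sign}(\eta)[v_0,\dots,v_q]$. Each simplex has a fixed orientation; $C_m(K)$ is the real vector space with basis the fixed-orientation $m$-simplices (opposite orientation = negative), $C_m(K)=0$ for $m\notin[0,\dim K]$, with the inner product making this basis orthonormal; $\partial^*$ denotes the adjoint with respect to these inner products (its matrix is the transpose). Multi-parameter boundary operator: for $m\ge k\ge0$, $\partial_{m,k}\colon C_m(K)\to C_{m-k}(K)$ is linear with $\partial_{m,k}([v_{\eta(0)},\dots,v_{\eta(m)}])=\sum_{J}\operatorname{sign}(\eta)\operatorname{sign}(\epsilon_J)[v_0,\dots,\widehat{v_{j_1}},\dots,\widehat{v_{j_k}},\dots,v_m]$, summing over subsets $J=\{j_1<\dots<j_k\}\subseteq\{0,\dots,m\}$ (hatted vertices removed, others in increasing index order), $\epsilon_J$ the permutation of $\{0,\dots,m\}$ with $r\mapsto j_{r+1}$ for $r<k$ and $k,\dots,m$ mapped increasingly onto the complement of $J$; if $m<k$ then $\partial_{m,k}=0$. For a $p$-simplex $\tau$ and a face $\sigma\subseteq\tau$ of dimension $m$, $\operatorname{sign}(\tau,\sigma)\in\{\pm1\}$ is the coefficient of $\sigma$ in $\partial_{p,p-m}(\tau)$ (so $\operatorname{sign}(\tau,\tau)=1$).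 Upper sign: $\operatorname{sig}_U(\sigma,\sigma';\tau^{(p)})=0$ if $\sigma\cup\sigma'\not\subseteq\tau^{(p)}$, else $\operatorname{sign}(\tau^{(p)},\sigma)\operatorname{sign}(\tau^{(p)},\sigma')$. Lower sign: $\operatorname{sig}_L(\sigma,\sigma';\tau^{(p)})=0$ if $\tau^{(p)}\not\subseteq\sigma\cap\sigma'$, else $\operatorname{sign}(\sigma,\tau^{(p)})\operatorname{sign}(\sigma',\tau^{(p)})$. Both are independent of the orientation of $\tau^{(p)}$. Oriented degrees: $\operatorname{odeg}^p_U(\sigma,\sigma')=\frac12\sum_{\tau^{(p)}}\operatorname{sig}_U(\sigma,\sigma';\tau^{(p)})$ and $\operatorname{odeg}^p_L(\sigma,\sigma')=\frac12\sum_{\tau^{(p)}}\operatorname{sig}_L(\sigma,\sigma';\tau^{(p)})$, sums over all oriented $p$-simplices of $K$ (each with both orientations). $\deg_U^{h,q+h}(\sigma^{(q)})$ is the number of $(q+h)$-simplices $\sigma^{(q+h)}$ of $K$ such that some $(q+h)$-simplex contains both $\sigma^{(q)}$ and $\sigma^{(q+h)}$, i.e. the number of $(q+h)$-simplices of $K$ having $\sigma^{(q)}$ as a face. *)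

theory Defs
  imports "HOL-Combinatorics.Permutations" "Jordan_Normal_Form.Matrix"
begin

definition simplicial_complex :: "'v set set \<Rightarrow> bool" where
  "simplicial_complex K \<longleftrightarrow> finite K \<and> (\<forall>\<sigma>\<in>K. finite \<sigma> \<and> \<sigma> \<noteq> {})
     \<and> (\<forall>\<sigma>\<in>K. \<forall>\<tau>. \<tau> \<subseteq> \<sigma> \<and> \<tau> \<noteq> {} \<longrightarrow> \<tau> \<in> K)"

definition simplices :: "'v set set \<Rightarrow> nat \<Rightarrow> 'v set set" where
  "simplices K m = {\<sigma>\<in>K. card \<sigma> = m + 1}"

text \<open>A fixed orientation: each simplex gets a fixed ordering of its vertices
  (orientation = its class modulo even permutations).\<close>
definition orientation :: "'v set set \<Rightarrow> ('v set \<Rightarrow> 'v list) \<Rightarrow> bool" where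
  "orientation K ori \<longleftrightarrow> (\<forall>\<sigma>\<in>K. distinct (ori \<sigma>) \<and> set (ori \<sigma>) = \<sigma>)"

text \<open>Relative sign of two orderings xs, ys of the same vertex set:
  if xs ! i = ys ! (eta i), then [xs] = sign eta [ys].\<close>
definition list_perm :: "'v list \<Rightarrow> 'v list \<Rightarrow> nat \<Rightarrow> nat" where
  "list_perm xs ys i = (if i < length xs then (THE j. j < length ys \<and> ys ! j = xs ! i) else i)"

definition lsign :: "'v list \<Rightarrow> 'v list \<Rightarrow> int" where
  "lsign xs ys = sign (list_perm xs ys)"

definition epsJ :: "nat \<Rightarrow> nat set \<Rightarrow> nat \<Rightarrow> nat" where
  "epsJ m J r = (if r \<le> m then (sorted_list_of_set J @ sorted_list_of_set ({0..m} - J)) ! r else r)"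

text \<open>Coefficient of the (fixed-orientation) simplex sigma in
  the multi-parameter boundary of the (fixed-orientation) m-simplex tau,
  i.e. in partial_(m,k)(tau), following the defining sum over J literally.
  If m < k, there are no such J and the coefficient is 0.\<close>
definition bdry_coeff :: "('v set \<Rightarrow> 'v list) \<Rightarrow> nat \<Rightarrow> nat \<Rightarrow> 'v set \<Rightarrow> 'v set \<Rightarrow> real" where
  "bdry_coeff ori m k \<tau> \<sigma> =
     (\<Sum>J\<in>{J. J \<subseteq> {0..m} \<and> card J = k}.
        of_int (sign (epsJ m J)) *
        (let w = nths (ori \<tau>) ({0..m} - J)
         in if set w = \<sigma> then of_int (lsign w (ori \<sigma>)) else 0))"

text \<open>Matrix of partial_(m,k) : C_m(K) \<rightarrow> C_(m-k)(K) with respect to the ordered bases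
  cs (of C_m) and rs (of C_(m-k)).\<close>
definition bmat :: "('v set \<Rightarrow> 'v list) \<Rightarrow> nat \<Rightarrow> nat \<Rightarrow> 'v set list \<Rightarrow> 'v set list \<Rightarrow> real mat" where
  "bmat ori m k cs rs =
     mat (length rs) (length cs) (\<lambda>(i, j). bdry_coeff ori m k (cs ! j) (rs ! i))"

definition face_sign :: "('v set \<Rightarrow> 'v list) \<Rightarrow> 'v set \<Rightarrow> 'v set \<Rightarrow> real" where
  "face_sign ori \<tau> \<sigma> = bdry_coeff ori (card \<tau> - 1) (card \<tau> - card \<sigma>) \<tau> \<sigma>"

text \<open>Oriented p-simplices are represented as pairs (e, tau), e \<in> {1,-1}, meaning
  e times the fixed-orientation simplex tau. Signs w.r.t. the opposite orientation
  change sign by linearity of the boundary operator.\<close>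
definition sigU :: "('v set \<Rightarrow> 'v list) \<Rightarrow> 'v set \<Rightarrow> 'v set \<Rightarrow> real \<times> 'v set \<Rightarrow> real" where
  "sigU ori \<sigma> \<sigma>' t = (case t of (e, \<tau>) \<Rightarrow>
     if \<not> (\<sigma> \<union> \<sigma>' \<subseteq> \<tau>) then 0
     else (e * face_sign ori \<tau> \<sigma>) * (e * face_sign ori \<tau> \<sigma>'))"

definition sigL :: "('v set \<Rightarrow> 'v list) \<Rightarrow> 'v set \<Rightarrow> 'v set \<Rightarrow> real \<times> 'v set \<Rightarrow> real" where
  "sigL ori \<sigma> \<sigma>' t = (case t of (e, \<tau>) \<Rightarrow>
     if \<not> (\<tau> \<subseteq> \<sigma> \<inter> \<sigma>') then 0
     else (e * face_sign ori \<sigma> \<tau>) * (e * face_sign ori \<sigma>' \<tau>))"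

definition oriented_simplices :: "'v set set \<Rightarrow> nat \<Rightarrow> (real \<times> 'v set) set" where
  "oriented_simplices K p = {1, -1} \<times> simplices K p"

definition odegU :: "'v set set \<Rightarrow> ('v set \<Rightarrow> 'v list) \<Rightarrow> nat \<Rightarrow> 'v set \<Rightarrow> 'v set \<Rightarrow> real" where
  "odegU K ori p \<sigma> \<sigma>' = (1/2) * (\<Sum>t\<in>oriented_simplices K p. sigU ori \<sigma> \<sigma>' t)"

definition odegL :: "'v set set \<Rightarrow> ('v set \<Rightarrow> 'v list) \<Rightarrow> nat \<Rightarrow> 'v set \<Rightarrow> 'v set \<Rightarrow> real" where
  "odegL K ori p \<sigma> \<sigma>' = (1/2) * (\<Sum>t\<in>oriented_simplices K p. sigL ori \<sigma> \<sigma>' t)"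

definition degU :: "'v set set \<Rightarrow> nat \<Rightarrow> nat \<Rightarrow> 'v set \<Rightarrow> nat" where
  "degU K h q \<sigma> = card {\<tau>\<in>simplices K (q + h). \<sigma> \<subseteq> \<tau>}"

end

theory Submission
  imports Defs
begin

text \<open>Each entry of \<open>B B\<^sup>t\<close> and \<open>B\<^sup>t B\<close> is a sum, over the simplices of
  the other dimension, of products of two boundary coefficients. The coefficient of
  \<open>\<sigma>\<close> in the boundary of \<open>\<tau>\<close> vanishes unless \<open>\<sigma>\<close> is a face of \<open>\<tau>\<close>, and on a face
  it is a single sign, since only the set of positions of the removed vertices
  contributes to the defining sum. Off the diagonal this makes the entries the
  oriented degrees (the sums there run over both orientations of each simplex, which
  the factor 1/2 compensates); on the diagonal the squared signs count the
  (q+h)-simplices containing \<open>\<sigma>\<close>, respectively the (q-h')-faces of the q-simplex \<open>\<sigma>\<close>,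
  of which there are \<open>(q+1) choose (q-h'+1)\<close>.\<close>

lemma nth_image_positions_in:
  assumes "length xs = m + 1" "\<sigma> \<subseteq> set xs"
  shows "(!) xs ` {i\<in>{0..m}. xs ! i \<in> \<sigma>} = \<sigma>"
proof (intro equalityI subsetI)
  fix x assume "x \<in> \<sigma>"
  then obtain i where "i < length xs" "xs ! i = x"
    using assms(2) by (metis in_set_conv_nth subsetD)
  with \<open>x \<in> \<sigma>\<close> assms(1) show "x \<in> (!) xs ` {i\<in>{0..m}. xs ! i \<in> \<sigma>}"
    by (intro rev_image_eqI[of i]) auto
qed auto

lemma set_nths_complement_eq_iff:
  assumes "distinct xs" "length xs = m + 1" "\<sigma> \<subseteq> set xs" "J \<subseteq> {0..m}"
  shows "set (nths xs ({0..m} - J)) = \<sigma> \<longleftrightarrow> J = {i\<in>{0..m}. xs ! i \<notin> \<sigma>}"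
proof -
  have range: "{0..m} = {..<length xs}" using assms(2) by auto
  have inj: "inj_on ((!) xs) {0..m}"
    using assms(1) range by (simp add: inj_on_nth)
  have "set (nths xs ({0..m} - J)) = (!) xs ` ({0..m} - J)"
    by (auto simp: set_nths range)
  then have "set (nths xs ({0..m} - J)) = \<sigma>
      \<longleftrightarrow> (!) xs ` ({0..m} - J) = (!) xs ` {i\<in>{0..m}. xs ! i \<in> \<sigma>}"
    using nth_image_positions_in[OF assms(2,3)] by simp
  also have "\<dots> \<longleftrightarrow> {0..m} - J = {i\<in>{0..m}. xs ! i \<in> \<sigma>}"
    by (rule inj_on_image_eq_iff[OF inj]) auto
  also have "\<dots> \<longleftrightarrow> J = {i\<in>{0..m}. xs ! i \<notin> \<sigma>}"
    using assms(4) by blast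
  finally show ?thesis .
qed

lemma card_positions_in:
  assumes "distinct xs" "length xs = m + 1" "\<sigma> \<subseteq> set xs"
  shows "card {i\<in>{0..m}. xs ! i \<in> \<sigma>} = card \<sigma>"
proof -
  have "inj_on ((!) xs) {i\<in>{0..m}. xs ! i \<in> \<sigma>}"
    using assms(1,2) by (auto simp: inj_on_def nth_eq_iff_index_eq)
  then show ?thesis using nth_image_positions_in[OF assms(2,3)] by (metis card_image)
qed

lemma bdry_coeff_face:
  assumes "distinct (ori \<tau>)" "set (ori \<tau>) = \<tau>" "card \<tau> = m + 1"
    and "\<sigma> \<subseteq> \<tau>" "card \<sigma> + k = m + 1"
  defines "J\<^sub>0 \<equiv> {i\<in>{0..m}. ori \<tau> ! i \<notin> \<sigma>}"
  shows "bdry_coeff ori m k \<tau> \<sigma>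
    = of_int (sign (epsJ m J\<^sub>0) * lsign (nths (ori \<tau>) ({0..m} - J\<^sub>0)) (ori \<sigma>))"
proof -
  let ?xs = "ori \<tau>" and ?Js = "{J. J \<subseteq> {0..m} \<and> card J = k}"
  have length: "length ?xs = m + 1"
    using assms(1-3) distinct_card by fastforce
  have J\<^sub>0_sub: "J\<^sub>0 \<subseteq> {0..m}" unfolding J\<^sub>0_def by auto
  have "{0..m} - J\<^sub>0 = {i\<in>{0..m}. ?xs ! i \<in> \<sigma>}" unfolding J\<^sub>0_def by auto
  then have "card ({0..m} - J\<^sub>0) = card \<sigma>"
    using card_positions_in[OF assms(1) length] assms(2,4) by simp
  then have "card J\<^sub>0 = k"
    using card_Diff_subset[OF finite_subset[OF J\<^sub>0_sub] J\<^sub>0_sub] card_mono[OF _ J\<^sub>0_sub]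
      assms(5) by simp
  then have J\<^sub>0_in: "J\<^sub>0 \<in> ?Js" using J\<^sub>0_sub by simp
  have face_iff: "set (nths ?xs ({0..m} - J)) = \<sigma> \<longleftrightarrow> J = J\<^sub>0" if "J \<subseteq> {0..m}" for J
    unfolding J\<^sub>0_def using set_nths_complement_eq_iff[OF assms(1) length _ that] assms(2,4) by simp
  define summand where "summand J = of_int (sign (epsJ m J)) *
    (let w = nths ?xs ({0..m} - J) in if set w = \<sigma> then of_int (lsign w (ori \<sigma>)) else (0::real))"
    for J
  have "finite ?Js" by (rule finite_subset[of _ "Pow {0..m}"]) auto
  moreover have "summand J = 0" if "J \<in> ?Js - {J\<^sub>0}" for J
    using face_iff that unfolding summand_def Let_def by auto
  ultimately have "sum summand ?Js = summand J\<^sub>0"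
    using sum.remove[OF _ J\<^sub>0_in, of summand] by (simp add: sum.neutral)
  then show ?thesis
    using face_iff[OF J\<^sub>0_sub] unfolding bdry_coeff_def summand_def[abs_def]
    by (simp add: Let_def)
qed

lemma bdry_coeff_eq_0_if_not_subset:
  assumes "set (ori \<tau>) = \<tau>" "\<not> \<sigma> \<subseteq> \<tau>"
  shows "bdry_coeff ori m k \<tau> \<sigma> = 0"
proof -
  have "set (nths (ori \<tau>) I) \<noteq> \<sigma>" for I
    using set_nths_subset[of "ori \<tau>" I] assms by auto
  then show ?thesis unfolding bdry_coeff_def by (simp add: Let_def)
qed

lemma bdry_coeff_square:
  assumes "orientation K ori" "\<tau> \<in> simplices K m" "card \<sigma> + k = m + 1"
  shows "bdry_coeff ori m k \<tau> \<sigma> * bdry_coeff ori m k \<tau> \<sigma> = (if \<sigma> \<subseteq> \<tau> then 1 else 0)"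
proof (cases "\<sigma> \<subseteq> \<tau>")
  case True
  have \<tau>: "distinct (ori \<tau>)" "set (ori \<tau>) = \<tau>" "card \<tau> = m + 1"
    using assms(1,2) unfolding orientation_def simplices_def by auto
  obtain p p' :: "nat \<Rightarrow> nat" where "bdry_coeff ori m k \<tau> \<sigma> = of_int (sign p * sign p')"
    using bdry_coeff_face[of ori \<tau> m \<sigma> k, OF \<tau> True assms(3)] unfolding lsign_def by blast
  moreover have "sign p * sign p' * (sign p * sign p') = (1::int)"
    by (simp add: mult_ac)
  ultimately show ?thesis
    using True by (metis of_int_1 of_int_mult)
next
  case False
  have "set (ori \<tau>) = \<tau>"
    using assms(1,2) unfolding orientation_def simplices_def by auto
  then show ?thesis
    using bdry_coeff_eq_0_if_not_subset[of ori \<tau> \<sigma>] False by simp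
qed

lemma bmat_mult_transpose_index:
  assumes "distinct cs" "i < length rs" "j < length rs"
  shows "(bmat ori m k cs rs * transpose_mat (bmat ori m k cs rs)) $$ (i, j)
    = (\<Sum>\<tau>\<in>set cs. bdry_coeff ori m k \<tau> (rs ! i) * bdry_coeff ori m k \<tau> (rs ! j))"
proof -
  have "(bmat ori m k cs rs * transpose_mat (bmat ori m k cs rs)) $$ (i, j)
      = (\<Sum>n = 0..<length cs. bdry_coeff ori m k (cs ! n) (rs ! i) * bdry_coeff ori m k (cs ! n) (rs ! j))"
    using assms(2,3) by (simp add: bmat_def scalar_prod_def)
  also have "\<dots> = (\<Sum>\<tau>\<in>set cs. bdry_coeff ori m k \<tau> (rs ! i) * bdry_coeff ori m k \<tau> (rs ! j))"
    by (rule sum.reindex_bij_betw[OF bij_betw_nth[OF assms(1)]]) auto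
  finally show ?thesis .
qed

lemma transpose_bmat_mult_index:
  assumes "distinct rs" "i < length cs" "j < length cs"
  shows "(transpose_mat (bmat ori m k cs rs) * bmat ori m k cs rs) $$ (i, j)
    = (\<Sum>\<rho>\<in>set rs. bdry_coeff ori m k (cs ! i) \<rho> * bdry_coeff ori m k (cs ! j) \<rho>)"
proof -
  have "(transpose_mat (bmat ori m k cs rs) * bmat ori m k cs rs) $$ (i, j)
      = (\<Sum>n = 0..<length rs. bdry_coeff ori m k (cs ! i) (rs ! n) * bdry_coeff ori m k (cs ! j) (rs ! n))"
    using assms(2,3) by (simp add: bmat_def scalar_prod_def)
  also have "\<dots> = (\<Sum>\<rho>\<in>set rs. bdry_coeff ori m k (cs ! i) \<rho> * bdry_coeff ori m k (cs ! j) \<rho>)"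
    by (rule sum.reindex_bij_betw[OF bij_betw_nth[OF assms(1)]]) auto
  finally show ?thesis .
qed

lemma finite_simplices: "simplicial_complex K \<Longrightarrow> finite (simplices K p)"
  unfolding simplicial_complex_def simplices_def by auto

lemma card_faces_of_simplex:
  assumes "simplicial_complex K" "\<sigma> \<in> simplices K q"
  shows "card {\<rho> \<in> simplices K p. \<rho> \<subseteq> \<sigma>} = (q + 1) choose (p + 1)"
proof -
  have "\<rho> \<in> K" if "\<rho> \<subseteq> \<sigma>" "card \<rho> = p + 1" for \<rho>
  proof -
    have "\<rho> \<noteq> {}" using that(2) by auto
    then show ?thesis using assms that(1) unfolding simplicial_complex_def simplices_def by blast
  qed
  then have "{\<rho> \<in> simplices K p. \<rho> \<subseteq> \<sigma>} = {\<rho>. \<rho> \<subseteq> \<sigma> \<and> card \<rho> = p + 1}"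
    unfolding simplices_def by auto
  moreover have "finite \<sigma>" "card \<sigma> = q + 1"
    using assms unfolding simplicial_complex_def simplices_def by auto
  ultimately show ?thesis by (simp add: n_subsets)
qed

lemma sum_signed_copies:
  fixes g :: "real \<times> 'a \<Rightarrow> real"
  assumes "\<And>e x. e \<in> {1, -1} \<Longrightarrow> x \<in> S \<Longrightarrow> g (e, x) = f x"
  shows "(\<Sum>t\<in>{1, -1} \<times> S. g t) = 2 * (\<Sum>x\<in>S. f x)"
  using assms by (simp add: sum.cartesian_product')

lemma odegU_eq_sum_bdry_coeff:
  assumes "orientation K ori" "\<sigma> \<in> simplices K q" "\<sigma>' \<in> simplices K q"
  shows "odegU K ori (q + h) \<sigma> \<sigma>'
    = (\<Sum>\<tau>\<in>simplices K (q + h). bdry_coeff ori (q + h) h \<tau> \<sigma> * bdry_coeff ori (q + h) h \<tau> \<sigma>')"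
    (is "_ = ?rhs")
proof -
  have "sigU ori \<sigma> \<sigma>' (e, \<tau>) = bdry_coeff ori (q + h) h \<tau> \<sigma> * bdry_coeff ori (q + h) h \<tau> \<sigma>'"
    if e: "e \<in> {1, -1}" and \<tau>: "\<tau> \<in> simplices K (q + h)" for e \<tau>
  proof -
    have set_ori: "set (ori \<tau>) = \<tau>" and card_\<tau>: "card \<tau> = q + h + 1"
      using assms(1) \<tau> unfolding orientation_def simplices_def by auto
    have "face_sign ori \<tau> \<rho> = bdry_coeff ori (q + h) h \<tau> \<rho>" if "\<rho> \<in> simplices K q" for \<rho>
      using that card_\<tau> unfolding face_sign_def simplices_def by simp
    moreover have "e * e = 1" using e by auto
    moreover have "bdry_coeff ori (q + h) h \<tau> \<sigma> * bdry_coeff ori (q + h) h \<tau> \<sigma>' = 0"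
      if "\<not> \<sigma> \<union> \<sigma>' \<subseteq> \<tau>"
    proof -
      have "\<not> \<sigma> \<subseteq> \<tau> \<or> \<not> \<sigma>' \<subseteq> \<tau>" using that by blast
      then show ?thesis
        by (elim disjE) (simp_all add: bdry_coeff_eq_0_if_not_subset[of ori \<tau>, OF set_ori])
    qed
    ultimately show ?thesis
      using assms(2,3) by (auto simp: sigU_def algebra_simps)
  qed
  then have "(\<Sum>t\<in>oriented_simplices K (q + h). sigU ori \<sigma> \<sigma>' t) = 2 * ?rhs"
    unfolding oriented_simplices_def by (rule sum_signed_copies)
  then show ?thesis unfolding odegU_def by simp
qed

lemma odegL_eq_sum_bdry_coeff:
  assumes "orientation K ori" "h' \<le> q" "\<sigma> \<in> simplices K q" "\<sigma>' \<in> simplices K q"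
  shows "odegL K ori (q - h') \<sigma> \<sigma>'
    = (\<Sum>\<rho>\<in>simplices K (q - h'). bdry_coeff ori q h' \<sigma> \<rho> * bdry_coeff ori q h' \<sigma>' \<rho>)"
    (is "_ = ?rhs")
proof -
  have set_ori: "set (ori \<sigma>) = \<sigma>" "set (ori \<sigma>') = \<sigma>'"
    using assms(1,3,4) unfolding orientation_def simplices_def by auto
  have "sigL ori \<sigma> \<sigma>' (e, \<rho>) = bdry_coeff ori q h' \<sigma> \<rho> * bdry_coeff ori q h' \<sigma>' \<rho>"
    if e: "e \<in> {1, -1}" and \<rho>: "\<rho> \<in> simplices K (q - h')" for e \<rho>
  proof -
    have "face_sign ori \<tau> \<rho> = bdry_coeff ori q h' \<tau> \<rho>" if "\<tau> \<in> simplices K q" for \<tau>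
      using that \<rho> assms(2) unfolding face_sign_def simplices_def by simp
    moreover have "e * e = 1" using e by auto
    moreover have "bdry_coeff ori q h' \<sigma> \<rho> * bdry_coeff ori q h' \<sigma>' \<rho> = 0"
      if "\<not> \<rho> \<subseteq> \<sigma> \<inter> \<sigma>'"
    proof -
      have "\<not> \<rho> \<subseteq> \<sigma> \<or> \<not> \<rho> \<subseteq> \<sigma>'" using that by blast
      then show ?thesis
        by (elim disjE) (simp_all add: bdry_coeff_eq_0_if_not_subset[of ori \<sigma>, OF set_ori(1)]
            bdry_coeff_eq_0_if_not_subset[of ori \<sigma>', OF set_ori(2)])
    qed
    ultimately show ?thesis
      using assms(3,4) by (auto simp: sigL_def algebra_simps)
  qed
  then have "(\<Sum>t\<in>oriented_simplices K (q - h'). sigL ori \<sigma> \<sigma>' t) = 2 * ?rhs"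
    unfolding oriented_simplices_def by (rule sum_signed_copies)
  then show ?thesis unfolding odegL_def by simp
qed

lemma odegU_self:
  assumes "simplicial_complex K" "orientation K ori" "\<sigma> \<in> simplices K q"
  shows "odegU K ori (q + h) \<sigma> \<sigma> = real (degU K h q \<sigma>)"
proof -
  have "card \<sigma> + h = q + h + 1" using assms(3) unfolding simplices_def by simp
  then have "odegU K ori (q + h) \<sigma> \<sigma> = (\<Sum>\<tau>\<in>simplices K (q + h). if \<sigma> \<subseteq> \<tau> then 1 else 0)"
    using odegU_eq_sum_bdry_coeff[OF assms(2,3,3)] bdry_coeff_square[OF assms(2)] by simp
  also have "\<dots> = real (card {\<tau> \<in> simplices K (q + h). \<sigma> \<subseteq> \<tau>})"
    using finite_simplices[OF assms(1)] by (simp flip: sum.inter_filter)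
  finally show ?thesis unfolding degU_def .
qed

lemma odegL_self:
  assumes "simplicial_complex K" "orientation K ori" "h' \<le> q" "\<sigma> \<in> simplices K q"
  shows "odegL K ori (q - h') \<sigma> \<sigma> = real ((q + 1) choose (q - h' + 1))"
proof -
  have "card \<rho> + h' = q + 1" if "\<rho> \<in> simplices K (q - h')" for \<rho>
    using that assms(3) unfolding simplices_def by simp
  then have "odegL K ori (q - h') \<sigma> \<sigma> = (\<Sum>\<rho>\<in>simplices K (q - h'). if \<rho> \<subseteq> \<sigma> then 1 else 0)"
    using odegL_eq_sum_bdry_coeff[OF assms(2,3,4,4)] bdry_coeff_square[OF assms(2,4)] by simp
  also have "\<dots> = real (card {\<rho> \<in> simplices K (q - h'). \<rho> \<subseteq> \<sigma>})"
    using finite_simplices[OF assms(1)] by (simp flip: sum.inter_filter)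
  finally show ?thesis using card_faces_of_simplex[OF assms(1,4)] by simp
qed

theorem mainTheorem4:
  fixes K :: "'v set set" and ori :: "'v set \<Rightarrow> 'v list"
    and q h h' :: nat and bq bu bl :: "'v set list"
  assumes "simplicial_complex K" and "orientation K ori"
    and "h' \<le> q"
    and "distinct bq" and "set bq = simplices K q"
    and "distinct bu" and "set bu = simplices K (q + h)"
    and "distinct bl" and "set bl = simplices K (q - h')"
  defines "LU \<equiv> bmat ori (q + h) h bu bq * transpose_mat (bmat ori (q + h) h bu bq)"
    and "LL \<equiv> transpose_mat (bmat ori q h' bq bl) * bmat ori q h' bq bl"
  shows "\<forall>i < length bq. \<forall>j < length bq.
     LU $$ (i, j) = (if i = j then real (degU K h q (bq ! i))
                     else odegU K ori (q + h) (bq ! i) (bq ! j))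
   \<and> LL $$ (i, j) = (if i = j then real ((q + 1) choose (q - h' + 1))
                     else odegL K ori (q - h') (bq ! i) (bq ! j))
   \<and> (LU + LL) $$ (i, j) = (if i = j then real (degU K h q (bq ! i)) + real ((q + 1) choose (q - h' + 1))
                     else odegU K ori (q + h) (bq ! i) (bq ! j) + odegL K ori (q - h') (bq ! i) (bq ! j))"
proof -
  have simplex: "bq ! i \<in> simplices K q" if "i < length bq" for i
    using that assms(5) nth_mem by blast
  have entries: "LU $$ (i, j) = odegU K ori (q + h) (bq ! i) (bq ! j)
      \<and> LL $$ (i, j) = odegL K ori (q - h') (bq ! i) (bq ! j)
      \<and> (LU + LL) $$ (i, j) = LU $$ (i, j) + LL $$ (i, j)"
    if i: "i < length bq" and j: "j < length bq" for i j
    using bmat_mult_transpose_index[OF assms(6) i j] transpose_bmat_mult_index[OF assms(8) i j]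
      odegU_eq_sum_bdry_coeff[OF assms(2) simplex[OF i] simplex[OF j]]
      odegL_eq_sum_bdry_coeff[OF assms(2,3) simplex[OF i] simplex[OF j]] i j
    unfolding LU_def LL_def assms(7,9) by (simp add: bmat_def)
  show ?thesis
    using entries odegU_self[OF assms(1,2) simplex] odegL_self[OF assms(1-3) simplex] by auto
qed

end
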